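(* For all $n\ge2$ and all $x,y\in\mathbb{B}^n$, $$\frac{1}{\sqrt2}\,\mathrm{th}\frac{\rho_{\mathbb{B}^n}(x,y)}{2}\le b_{\mathbb{B}^n,2}(x,y)\le\sqrt2\,\mathrm{th}\frac{\rho_{\mathbb{B}^n}(x,y)}{2},$$ and the constants $1/\sqrt2$ and $\sqrt2$ are the best possible.
   Context: $\mathbb{B}^n$ is the unit ball of $\mathbb{R}^n$. The hyperbolic metric of the unit ball satisfies $\mathrm{th}\frac{\rho_{\mathbb{B}^n}(x,y)}{2}=\frac{|x-y|}{\sqrt{|x-y|^2+(1-|x|^2)(1-|y|^2)}}$. For a domain $G\subsetneq\mathbb{R}^n$ and $p\ge1$, the Barrlund metric is $b_{G,p}(x,y)=\sup_{z\in\partial G}\frac{|x-y|}{(|x-z|^p+|z-y|^p)^{1/p}}$. *)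

theory Defs
  imports "HOL-Analysis.Analysis"
begin

text \<open>Hyperbolic metric of the unit ball, defined through the identity
  th(rho(x,y)/2) = |x-y| / sqrt(|x-y|^2 + (1-|x|^2)(1-|y|^2)).\<close>
definition hyp_ball :: "'a::real_normed_vector \<Rightarrow> 'a \<Rightarrow> real" where
  "hyp_ball x y = 2 * artanh (norm (x - y) /
      sqrt ((norm (x - y))\<^sup>2 + (1 - (norm x)\<^sup>2) * (1 - (norm y)\<^sup>2)))"

definition barrlund :: "'a::real_normed_vector set \<Rightarrow> real \<Rightarrow> 'a \<Rightarrow> 'a \<Rightarrow> real" where
  "barrlund G p x y = (SUP z\<in>frontier G.
      norm (x - y) / ((norm (x - z) powr p + norm (z - y) powr p) powr (1 / p)))"

end

theory Submission
  imports Defs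
begin

text \<open>Both \<open>th(\<rho>(x,y)/2)\<close> and \<open>b(x,y)\<close> are \<open>|x - y|\<close> divided by a square root.
  For \<open>b\<close> the supremum over the unit sphere is attained at \<open>(x + y)/|x + y|\<close>, giving the
  denominator \<open>\<surd>(|x|\<^sup>2 + |y|\<^sup>2 + 2 - 2|x + y|)\<close>. By the parallelogram law both radicands are
  polynomials in \<open>|x|\<close>, \<open>|y|\<close>, \<open>|x + y|\<close>, and elementary inequalities show that each is at
  most twice the other. Sharpness comes from letting the points approach the centre
  (ratio \<open>\<rightarrow> 1/\<surd>2\<close>) or a boundary point along a short chord perpendicular to the radius
  (ratio \<open>\<rightarrow> \<surd>2\<close>).\<close>

lemma tanh_artanh_real:
  fixes t :: real
  assumes "-1 < t" "t < 1"
  shows "tanh (artanh t) = t"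
proof -
  have "- 2 * artanh t = ln ((1 - t) / (1 + t))"
    using assms by (simp add: artanh_def ln_div)
  then have exp_eq: "exp (- 2 * artanh t) = (1 - t) / (1 + t)"
    using assms by simp
  show ?thesis
    using assms unfolding tanh_real_altdef exp_eq by (simp add: field_simps)
qed

lemma hyp_ball_denom_pos:
  fixes x y :: "'a::real_normed_vector"
  assumes "norm x < 1" "norm y < 1"
  shows "0 < norm (x - y) ^ 2 + (1 - norm x ^ 2) * (1 - norm y ^ 2)"
proof -
  have "0 < (1 - norm x ^ 2) * (1 - norm y ^ 2)"
    using assms by (intro mult_pos_pos) (simp_all add: abs_square_less_1)
  then show ?thesis by (simp add: add_nonneg_pos)
qed

lemma tanh_half_hyp_ball:
  fixes x y :: "'a::real_normed_vector"
  assumes "norm x < 1" "norm y < 1"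
  shows "tanh (hyp_ball x y / 2) =
           norm (x - y) / sqrt (norm (x - y) ^ 2 + (1 - norm x ^ 2) * (1 - norm y ^ 2))"
proof -
  define D where "D = norm (x - y) ^ 2 + (1 - norm x ^ 2) * (1 - norm y ^ 2)"
  have "norm x ^ 2 < 1" "norm y ^ 2 < 1"
    using assms by (simp_all add: abs_square_less_1)
  then have "norm (x - y) ^ 2 < D"
    unfolding D_def by (intro less_add_same_cancel1[THEN iffD2] mult_pos_pos) auto
  then have "norm (x - y) < sqrt D"
    using real_less_rsqrt by blast
  moreover have "0 < sqrt D"
    using calculation norm_ge_zero order_le_less_trans by blast
  ultimately have "norm (x - y) / sqrt D < 1" "0 \<le> norm (x - y) / sqrt D"
    by simp_all
  moreover have "hyp_ball x y / 2 = artanh (norm (x - y) / sqrt D)"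
    unfolding hyp_ball_def D_def by simp
  ultimately show ?thesis
    using tanh_artanh_real unfolding D_def by simp
qed

lemma barrlund_ball_denom_pos:
  fixes x y :: "'a::real_normed_vector"
  assumes "norm x < 1"
  shows "0 < norm x ^ 2 + norm y ^ 2 + 2 - 2 * norm (x + y)"
proof -
  have "(1 - norm x) ^ 2 + (1 - norm y) ^ 2 \<le> norm x ^ 2 + norm y ^ 2 + 2 - 2 * norm (x + y)"
    using norm_triangle_ineq[of x y] by (simp add: power2_eq_square algebra_simps)
  moreover have "0 < (1 - norm x) ^ 2"
    using assms by simp
  ultimately show ?thesis
    by (smt (verit) zero_le_power2)
qed

text \<open>On the unit sphere, \<open>|x - z|\<^sup>2 + |z - y|\<^sup>2 = |x|\<^sup>2 + |y|\<^sup>2 + 2 - 2 z\<cdot>(x + y)\<close>,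
  so the supremum is attained at the unit vector in the direction of \<open>x + y\<close>.\<close>
lemma barrlund_unit_ball_2:
  fixes x y :: "'a::{real_inner, perfect_space}"
  assumes "norm x < 1"
  shows "barrlund (ball 0 1) 2 x y =
           norm (x - y) / sqrt (norm x ^ 2 + norm y ^ 2 + 2 - 2 * norm (x + y))"
proof -
  define D where "D = norm x ^ 2 + norm y ^ 2 + 2 - 2 * norm (x + y)"
  define f where "f z = norm (x - y) / sqrt (norm (x - z) ^ 2 + norm (z - y) ^ 2)" for z :: 'a
  have D_pos: "0 < D"
    unfolding D_def using barrlund_ball_denom_pos[OF assms] .
  have sum_sq: "norm (x - z) ^ 2 + norm (z - y) ^ 2 = D + 2 * (norm (x + y) - inner z (x + y))"
    if "norm z = 1" for z
  proof -
    have "inner z z = 1"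
      using that by (metis power2_norm_eq_inner one_power2)
    then show ?thesis
      unfolding D_def power2_norm_eq_inner
      by (simp add: inner_diff_left inner_diff_right inner_add_right inner_commute algebra_simps)
  qed
  obtain z0 :: 'a where z0: "norm z0 = 1" "inner z0 (x + y) = norm (x + y)"
  proof (cases "x + y = 0")
    case True
    obtain u :: 'a where "norm u = 1"
      using vector_choose_size[of 1] by auto
    with True show ?thesis using that by simp
  next
    case False
    then show ?thesis
      using that[of "(1 / norm (x + y)) *\<^sub>R (x + y)"]
      by (simp add: power2_norm_eq_inner[symmetric] power2_eq_square)
  qed
  have f_le: "f z \<le> f z0" if "norm z = 1" for z
  proof -
    have "sqrt D \<le> sqrt (norm (x - z) ^ 2 + norm (z - y) ^ 2)"
      using sum_sq[OF that] norm_cauchy_schwarz[of z "x + y"] that by simp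
    then show ?thesis
      unfolding f_def sum_sq[OF z0(1)] z0(2) using D_pos
      by (intro divide_left_mono) auto
  qed
  have "barrlund (ball 0 1) 2 x y = Sup (f ` sphere 0 1)"
    unfolding barrlund_def f_def by (simp add: powr_numeral powr_half_sqrt)
  also have "\<dots> = f z0"
    using z0(1) f_le by (intro cSup_eq_maximum) auto
  also have "\<dots> = norm (x - y) / sqrt D"
    unfolding f_def sum_sq[OF z0(1)] z0(2) by simp
  finally show ?thesis
    unfolding D_def .
qed

text \<open>With \<open>a = |x|\<close>, \<open>b = |y|\<close>, \<open>s = |x + y|\<close>, the radicands for \<open>th(\<rho>/2)\<close> and \<open>b\<close>
  are \<open>1 + a\<^sup>2 + b\<^sup>2 - s\<^sup>2 + a\<^sup>2b\<^sup>2\<close> and \<open>a\<^sup>2 + b\<^sup>2 + 2 - 2s\<close>.\<close>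
lemma hyp_denom_le_twice_barrlund_denom:
  fixes a b s :: real
  assumes "0 \<le> a" "a \<le> 1" "0 \<le> b" "b \<le> 1" "0 \<le> s" "s \<le> a + b"
  shows "1 + a^2 + b^2 - s^2 + a^2 * b^2 \<le> 2 * (a^2 + b^2 + 2 - 2 * s)"
proof -
  have am_gm: "(1 - a^2) * (1 - b^2) \<le> (1 - (a^2 + b^2) / 2)^2"
    using sum_squares_ge_zero[of "a^2 - b^2" 0] by (simp add: power2_eq_square algebra_simps)
  have "a + b \<le> 1 + (a^2 + b^2) / 2"
    using sum_squares_ge_zero[of "a - 1" "b - 1"] by (simp add: power2_eq_square field_simps)
  then have "1 - (a^2 + b^2) / 2 \<le> 2 - s"
    using assms by simp
  moreover have "0 \<le> 1 - (a^2 + b^2) / 2"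
    using assms power_le_one[of a 2] power_le_one[of b 2] by simp
  ultimately have "(1 - (a^2 + b^2) / 2)^2 \<le> (2 - s)^2"
    by (rule power_mono)
  with am_gm have "(1 - a^2) * (1 - b^2) \<le> (2 - s)^2"
    by linarith
  then show ?thesis
    by (simp add: power2_eq_square algebra_simps)
qed

lemma barrlund_denom_le_twice_hyp_denom:
  fixes a b s :: real
  assumes "0 \<le> a" "a \<le> 1" "0 \<le> b" "b \<le> 1" "0 \<le> s" "s \<le> a + b"
  shows "a^2 + b^2 + 2 - 2 * s \<le> 2 * (1 + a^2 + b^2 - s^2 + a^2 * b^2)"
proof -
  define u v where "u = 1 - a" and "v = 1 - b"
  have "0 \<le> (u - v)^2 + 2 * u * v * ((1 - u) * (1 - v) + (2 - u - v))"
    using assms unfolding u_def v_def by (intro add_nonneg_nonneg mult_nonneg_nonneg) auto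
  also have "\<dots> = a^2 + b^2 + 2 * a^2 * b^2 - 2 * (a + b) * (a + b - 1)"
    unfolding u_def v_def by (simp add: power2_eq_square algebra_simps)
  finally have at_sum: "2 * (a + b) * (a + b - 1) \<le> a^2 + b^2 + 2 * a^2 * b^2"
    by simp
  have "2 * s * (s - 1) \<le> a^2 + b^2 + 2 * a^2 * b^2"
  proof (cases "s \<le> 1")
    case True
    then have "2 * s * (s - 1) \<le> 0"
      using assms by (simp add: mult_nonneg_nonpos)
    then show ?thesis
      by (smt (verit) zero_le_power2 mult_nonneg_nonneg)
  next
    case False
    then have "s * (s - 1) \<le> (a + b) * (a + b - 1)"
      using assms by (intro mult_mono) auto
    with at_sum show ?thesis
      by linarith
  qed
  then show ?thesis
    by (simp add: power2_eq_square algebra_simps)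
qed

lemma mult_divide_sqrt_eq:
  fixes c d A :: real
  assumes "0 < c"
  shows "c * (d / sqrt A) = d / sqrt (A / c^2)"
  using assms by (simp add: real_sqrt_divide)

lemma mult_divide_sqrt_le_divide_sqrt:
  fixes c d A B :: real
  assumes "0 < c" "0 \<le> d" "0 < A" "0 < B" "c^2 * B \<le> A"
  shows "c * (d / sqrt A) \<le> d / sqrt B"
  unfolding mult_divide_sqrt_eq[OF assms(1)]
  using assms by (intro divide_left_mono) (auto intro!: mult_pos_pos simp: field_simps)

lemma mult_divide_sqrt_less_divide_sqrt:
  fixes c d A B :: real
  assumes "0 < c" "0 < d" "0 < A" "0 < B" "c^2 * B < A"
  shows "c * (d / sqrt A) < d / sqrt B"
  unfolding mult_divide_sqrt_eq[OF assms(1)]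
  using assms by (intro divide_strict_left_mono) (auto intro!: mult_pos_pos simp: field_simps)

lemma divide_sqrt_le_mult_divide_sqrt:
  fixes c d A B :: real
  assumes "0 < c" "0 \<le> d" "0 < A" "0 < B" "A \<le> c^2 * B"
  shows "d / sqrt B \<le> c * (d / sqrt A)"
  unfolding mult_divide_sqrt_eq[OF assms(1)]
  using assms by (intro divide_left_mono) (auto intro!: mult_pos_pos simp: field_simps)

lemma divide_sqrt_less_mult_divide_sqrt:
  fixes c d A B :: real
  assumes "0 < c" "0 < d" "0 < A" "0 < B" "A < c^2 * B"
  shows "d / sqrt B < c * (d / sqrt A)"
  unfolding mult_divide_sqrt_eq[OF assms(1)]
  using assms by (intro divide_strict_left_mono) (auto intro!: mult_pos_pos simp: field_simps)

lemma tanh_half_hyp_ball_nonneg: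
  fixes x y :: "'a::real_normed_vector"
  assumes "norm x < 1" "norm y < 1"
  shows "0 \<le> tanh (hyp_ball x y / 2)"
  unfolding tanh_half_hyp_ball[OF assms] using hyp_ball_denom_pos[OF assms] by simp

lemma barrlund_unit_ball_2_tanh_hyp_ball_bounds:
  fixes x y :: "'a::{real_inner, perfect_space}"
  assumes x: "norm x < 1" and y: "norm y < 1"
  shows "(1 / sqrt 2) * tanh (hyp_ball x y / 2) \<le> barrlund (ball 0 1) 2 x y"
    and "barrlund (ball 0 1) 2 x y \<le> sqrt 2 * tanh (hyp_ball x y / 2)"
proof -
  define a b s where "a = norm x" and "b = norm y" and "s = norm (x + y)"
  define D1 where "D1 = norm (x - y) ^ 2 + (1 - a^2) * (1 - b^2)"
  define D2 where "D2 = a^2 + b^2 + 2 - 2 * s"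
  have tanh_eq: "tanh (hyp_ball x y / 2) = norm (x - y) / sqrt D1"
    unfolding D1_def a_def b_def using tanh_half_hyp_ball[OF x y] .
  have barrlund_eq: "barrlund (ball 0 1) 2 x y = norm (x - y) / sqrt D2"
    unfolding D2_def a_def b_def s_def using barrlund_unit_ball_2[OF x] .
  have D1_pos: "0 < D1" and D2_pos: "0 < D2"
    unfolding D1_def D2_def a_def b_def s_def
    using hyp_ball_denom_pos[OF x y] barrlund_ball_denom_pos[OF x] by auto
  have "norm (x - y) ^ 2 = 2 * a^2 + 2 * b^2 - s^2"
    unfolding a_def b_def s_def using dot_norm[of x y] dot_norm_neg[of x y] by simp
  then have D1_eq: "D1 = 1 + a^2 + b^2 - s^2 + a^2 * b^2"
    unfolding D1_def by (simp add: algebra_simps)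
  have abs: "0 \<le> a" "a \<le> 1" "0 \<le> b" "b \<le> 1" "0 \<le> s" "s \<le> a + b"
    unfolding a_def b_def s_def using x y norm_triangle_ineq[of x y] by auto
  show "(1 / sqrt 2) * tanh (hyp_ball x y / 2) \<le> barrlund (ball 0 1) 2 x y"
    unfolding tanh_eq barrlund_eq using D1_pos D2_pos
      barrlund_denom_le_twice_hyp_denom[OF abs, folded D1_eq D2_def]
    by (intro mult_divide_sqrt_le_divide_sqrt) (auto simp: power_divide)
  show "barrlund (ball 0 1) 2 x y \<le> sqrt 2 * tanh (hyp_ball x y / 2)"
    unfolding tanh_eq barrlund_eq using D1_pos D2_pos
      hyp_denom_le_twice_barrlund_denom[OF abs, folded D1_eq D2_def]
    by (intro divide_sqrt_le_mult_divide_sqrt) auto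
qed

text \<open>For \<open>x = 0\<close> and \<open>|y| = t\<close> the ratio \<open>b/th(\<rho>/2)\<close> is \<open>1/\<surd>(2 - 2t + t\<^sup>2)\<close>, which tends
  to \<open>1/\<surd>2\<close> as \<open>t \<rightarrow> 0\<close>.\<close>
lemma barrlund_unit_ball_2_less_near_inv_sqrt2:
  assumes "1 / sqrt 2 < c"
  shows "\<exists>y\<in>ball (0::'a::{real_inner, perfect_space}) 1.
           barrlund (ball 0 1) 2 0 y < c * tanh (hyp_ball 0 y / 2)"
proof -
  have c_pos: "0 < c"
    using assms by (smt (verit) divide_pos_pos real_sqrt_gt_zero)
  have "(1 / sqrt 2)^2 < c^2"
    using assms by (intro power_strict_mono) auto
  then have c2: "1 / 2 < c^2"
    by (simp add: power_divide)
  define t where "t = 1 - 1 / (2 * c^2)"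
  have t: "0 < t" "t < 1"
    using c2 c_pos unfolding t_def by (auto simp: field_simps)
  obtain y :: 'a where y: "norm y = t"
    using vector_choose_size[of t] t by auto
  have tanh_eq: "tanh (hyp_ball 0 y / 2) = t / sqrt 1"
    using tanh_half_hyp_ball[of 0 y] y t by (simp add: power2_eq_square algebra_simps)
  have barrlund_eq: "barrlund (ball 0 1) 2 0 y = t / sqrt (t^2 + 2 - 2 * t)"
    using barrlund_unit_ball_2[of 0 y] y by simp
  have "c^2 * (2 - 2 * t) = 1"
    using c_pos unfolding t_def by (simp add: field_simps)
  then have "1 < c^2 * (t^2 + 2 - 2 * t)"
    using c_pos t by (simp add: algebra_simps)
  moreover have "0 < t^2 + 2 - 2 * t"
    using barrlund_ball_denom_pos[of "0::'a" y] y by simp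
  ultimately have "barrlund (ball 0 1) 2 0 y < c * tanh (hyp_ball 0 y / 2)"
    unfolding tanh_eq barrlund_eq using t c_pos by (intro divide_sqrt_less_mult_divide_sqrt) auto
  then show ?thesis
    using y t by auto
qed

text \<open>For \<open>x, y = t u \<plusminus> r v\<close> the ratio \<open>b/th(\<rho>/2)\<close> is \<open>\<surd>((1 + 2t + t\<^sup>2 + r\<^sup>2)/2)\<close>, which
  tends to \<open>\<surd>2\<close> as \<open>t \<rightarrow> 1\<close>, \<open>r \<rightarrow> 0\<close>; already \<open>t = C/\<surd>2\<close>, \<open>r = (1 - t)/2\<close> beat \<open>C\<close>.\<close>
lemma barrlund_unit_ball_2_greater_near_sqrt2:
  fixes u v :: "'a::{real_inner, perfect_space}"
  assumes uv: "norm u = 1" "norm v = 1" "inner u v = 0"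
    and C: "0 < C" "C < sqrt 2"
  shows "\<exists>x\<in>ball (0::'a) 1. \<exists>y\<in>ball 0 1. C * tanh (hyp_ball x y / 2) < barrlund (ball 0 1) 2 x y"
proof -
  define t where "t = C / sqrt 2"
  define r where "r = (1 - t) / 2"
  have t: "0 < t" "t < 1" and r: "0 < r"
    using C unfolding t_def r_def by (auto simp: field_simps)
  have C_sq: "C^2 = 2 * t^2"
    unfolding t_def by (simp add: power_divide)
  define x y where "x = t *\<^sub>R u + r *\<^sub>R v" and "y = t *\<^sub>R u - r *\<^sub>R v"
  have "inner u u = 1" "inner v v = 1"
    using uv by (simp_all flip: power2_norm_eq_inner)
  then have nx: "norm x ^ 2 = t^2 + r^2" and ny: "norm y ^ 2 = t^2 + r^2"
    unfolding x_def y_def power2_norm_eq_inner using uv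
    by (simp_all add: inner_add_left inner_add_right inner_diff_left inner_diff_right
        inner_commute power2_eq_square)
  have nxy: "norm (x + y) = 2 * t" and nmy: "norm (x - y) = 2 * r"
    unfolding x_def y_def using uv t r by (simp_all flip: scaleR_2 add: algebra_simps)
  have "t^2 + r^2 < 1"
  proof -
    have "t^2 + r^2 \<le> (t + r)^2"
      using t r by (simp add: power2_eq_square algebra_simps)
    also have "\<dots> < 1"
      using t r unfolding abs_square_less_1 r_def by (simp add: abs_if field_simps)
    finally show ?thesis .
  qed
  then have x: "norm x < 1" and y: "norm y < 1"
    using nx ny abs_square_less_1[of "norm x"] abs_square_less_1[of "norm y"] by simp_all
  define P where "P = 1 + t^2 + r^2"
  define D1 where "D1 = norm (x - y) ^ 2 + (1 - norm x ^ 2) * (1 - norm y ^ 2)"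
  define D2 where "D2 = norm x ^ 2 + norm y ^ 2 + 2 - 2 * norm (x + y)"
  have D1_eq: "D1 = (P - 2 * t) * (P + 2 * t)"
    unfolding D1_def P_def nmy nx ny by (simp add: power2_eq_square algebra_simps)
  have D2_eq: "D2 = 2 * (P - 2 * t)"
    unfolding D2_def P_def nxy nx ny by (simp add: power2_eq_square algebra_simps)
  have P_minus: "0 < P - 2 * t"
    using barrlund_ball_denom_pos[OF x, of y] unfolding D2_def[symmetric] D2_eq by simp
  have "0 < (1 - t) * (1 + 3 * t) + r^2"
    using t by (intro add_pos_nonneg mult_pos_pos) auto
  also have "\<dots> = P + 2 * t - 2 * C^2"
    unfolding P_def C_sq by (simp add: power2_eq_square algebra_simps)
  finally have "0 < (P - 2 * t) * (P + 2 * t - 2 * C^2)"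
    using P_minus by simp
  then have "C^2 * D2 < D1"
    unfolding D1_eq D2_eq by (simp add: algebra_simps)
  moreover have "0 < D1" "0 < D2"
    unfolding D1_def D2_def using hyp_ball_denom_pos[OF x y] barrlund_ball_denom_pos[OF x] .
  ultimately have "C * tanh (hyp_ball x y / 2) < barrlund (ball 0 1) 2 x y"
    unfolding tanh_half_hyp_ball[OF x y] barrlund_unit_ball_2[OF x] D1_def[symmetric] D2_def[symmetric]
    using C r nmy by (intro mult_divide_sqrt_less_divide_sqrt) auto
  with x y show ?thesis
    by (intro bexI[of _ x] bexI[of _ y]) auto
qed

theorem corollary3p6:
  assumes "CARD('n) \<ge> 2"
  shows "(\<forall>x\<in>ball (0::real^'n) 1. \<forall>y\<in>ball 0 1.
            (1 / sqrt 2) * tanh (hyp_ball x y / 2) \<le> barrlund (ball 0 1) 2 x y \<and>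
            barrlund (ball 0 1) 2 x y \<le> sqrt 2 * tanh (hyp_ball x y / 2))
       \<and> (\<forall>c > 1 / sqrt 2. \<exists>x\<in>ball (0::real^'n) 1. \<exists>y\<in>ball 0 1.
            barrlund (ball 0 1) 2 x y < c * tanh (hyp_ball x y / 2))
       \<and> (\<forall>C < sqrt 2. \<exists>x\<in>ball (0::real^'n) 1. \<exists>y\<in>ball 0 1.
            C * tanh (hyp_ball x y / 2) < barrlund (ball 0 1) 2 x y)"
proof (intro conjI allI impI ballI)
  fix x y :: "real^'n"
  assume "x \<in> ball 0 1" "y \<in> ball 0 1"
  then show "(1 / sqrt 2) * tanh (hyp_ball x y / 2) \<le> barrlund (ball 0 1) 2 x y"
    and "barrlund (ball 0 1) 2 x y \<le> sqrt 2 * tanh (hyp_ball x y / 2)"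
    using barrlund_unit_ball_2_tanh_hyp_ball_bounds by auto
next
  fix c :: real
  assume "c > 1 / sqrt 2"
  then show "\<exists>x\<in>ball (0::real^'n) 1. \<exists>y\<in>ball 0 1.
               barrlund (ball 0 1) 2 x y < c * tanh (hyp_ball x y / 2)"
    using barrlund_unit_ball_2_less_near_inv_sqrt2 centre_in_ball zero_less_one by blast
next
  fix C :: real
  assume C: "C < sqrt 2"
  then have C': "max 1 C < sqrt 2"
    by simp
  obtain i j :: 'n where "i \<noteq> j"
    using assms card_le_Suc0_iff_eq[of "UNIV :: 'n set"] by auto
  then have "\<exists>x\<in>ball (0::real^'n) 1. \<exists>y\<in>ball 0 1.
               max 1 C * tanh (hyp_ball x y / 2) < barrlund (ball 0 1) 2 x y"
    using C' by (intro barrlund_unit_ball_2_greater_near_sqrt2[of "axis i 1" "axis j 1"])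
      (auto simp: inner_axis_axis)
  then obtain x y :: "real^'n" where xy: "x \<in> ball 0 1" "y \<in> ball 0 1"
    and less: "max 1 C * tanh (hyp_ball x y / 2) < barrlund (ball 0 1) 2 x y"
    by blast
  have "C * tanh (hyp_ball x y / 2) \<le> max 1 C * tanh (hyp_ball x y / 2)"
    using xy tanh_half_hyp_ball_nonneg[of x y] by (intro mult_right_mono) auto
  with xy less show "\<exists>x\<in>ball (0::real^'n) 1. \<exists>y\<in>ball 0 1.
                    C * tanh (hyp_ball x y / 2) < barrlund (ball 0 1) 2 x y"
    by (intro bexI[of _ x] bexI[of _ y]) auto
qed

end
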